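(* Let $U$ be a unicyclic graph of order $n\ge 3$ and let $X\in\mathbb R^{V(U)}$ be a vector all of whose entries are non-negative, or all of whose entries are non-positive. Label the vertices $v_1,\dots,v_n$ of $U$ so that $|X_{v_1}|\ge |X_{v_2}|\ge\cdots\ge |X_{v_n}|$, and write $X_i=X_{v_i}$. Then $$\sum_{uv\in E(U)}X_uX_v\ \le\ \sum_{i=2}^n X_1X_i+X_2X_3,$$ where the right-hand side equals $\sum_{uv\in E(S)}X_uX_v$ for the copy $S$ of $S_n^3$ on the same vertex set in which $v_1$ is adjacent to all other vertices and $v_2v_3$ is the additional edge. If moreover all entries of $X$ are positive (or all are negative) and $|X_1|>|X_2|$, then equality holds only if $U$ is isomorphic to $S_n^3$, with $v_1$ being its vertex of degree $n-1$.
   Context: A unicyclic graph is a connected graph containing exactly one cycle. $S_n^3$ denotes the graph of order $n$ obtained from the star $K_{1,n-1}$ by adding one edge between two of its pendant (degree-one) vertices. *)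

theory Defs
  imports Complex_Main
begin

definition simple_graph :: "'a set \<Rightarrow> 'a set set \<Rightarrow> bool" where
  "simple_graph V E \<longleftrightarrow> finite V \<and>
     (\<forall>e\<in>E. \<exists>u v. u \<in> V \<and> v \<in> V \<and> u \<noteq> v \<and> e = {u, v})"

definition adj :: "'a set set \<Rightarrow> 'a \<Rightarrow> 'a \<Rightarrow> bool" where
  "adj E u v \<longleftrightarrow> {u, v} \<in> E"

definition connected_graph :: "'a set \<Rightarrow> 'a set set \<Rightarrow> bool" where
  "connected_graph V E \<longleftrightarrow> V \<noteq> {} \<and>
     (\<forall>u\<in>V. \<forall>v\<in>V. (u, v) \<in> {(x, y). adj E x y}\<^sup>*)"

definition cycle_edges :: "'a list \<Rightarrow> 'a set set" where
  "cycle_edges vs = {{vs ! i, vs ! ((i + 1) mod length vs)} | i. i < length vs}"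

text \<open>A cycle of the graph (as a subgraph, identified with its edge set).\<close>
definition is_cycle :: "'a set set \<Rightarrow> 'a set set \<Rightarrow> bool" where
  "is_cycle E C \<longleftrightarrow> (\<exists>vs. length vs \<ge> 3 \<and> distinct vs \<and> C = cycle_edges vs \<and> C \<subseteq> E)"

definition unicyclic :: "'a set \<Rightarrow> 'a set set \<Rightarrow> bool" where
  "unicyclic V E \<longleftrightarrow> simple_graph V E \<and> connected_graph V E \<and> (\<exists>!C. is_cycle E C)"

definition S3_edges :: "nat \<Rightarrow> nat set set" where
  "S3_edges n = {{0, i} | i. 1 \<le> i \<and> i < n} \<union> {{1, 2}}"

definition graph_iso :: "('a \<Rightarrow> 'b) \<Rightarrow> 'a set \<Rightarrow> 'a set set \<Rightarrow> 'b set \<Rightarrow> 'b set set \<Rightarrow> bool" where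
  "graph_iso f V E W F \<longleftrightarrow> bij_betw f V W \<and>
     (\<forall>u\<in>V. \<forall>v\<in>V. {u, v} \<in> E \<longleftrightarrow> {f u, f v} \<in> F)"

end

theory Submission
  imports Defs
begin

text \<open>Orient the edges of \<open>U\<close> so that no vertex is the head of two edges: orient a spanning
  forest away from a vertex of the unique cycle and let the remaining cycle edge point to it.
  Taking \<open>v\<^sub>1\<close> as hub, send each edge through \<open>v\<^sub>1\<close> to its other end and every other edge to
  its head. The weight of an edge is at most \<open>|X\<^sub>1|\<close> times the weight of its image, and the
  map into \<open>V - {v\<^sub>1}\<close> is injective except on at most one edge avoiding \<open>v\<^sub>1\<close>, which
  weighs at most \<open>X\<^sub>2 X\<^sub>3\<close>. In the strict case equality forces that extra edge to exist,
  every other edge to pass through \<open>v\<^sub>1\<close> and the map to be onto, i.e. \<open>U\<close> is \<open>S\<^sub>n\<^sup>3\<close>.\<close>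

lemma simple_graph_subset: "simple_graph V E \<Longrightarrow> F \<subseteq> E \<Longrightarrow> simple_graph V F"
  unfolding simple_graph_def by blast

lemma simple_graph_edgeE:
  assumes "simple_graph V E" "e \<in> E"
  obtains u w where "u \<in> V" "w \<in> V" "u \<noteq> w" "e = {u, w}"
  using assms unfolding simple_graph_def by auto

lemma simple_graph_edge_subset: "simple_graph V E \<Longrightarrow> e \<in> E \<Longrightarrow> e \<subseteq> V"
  by (erule simple_graph_edgeE) auto

lemma simple_graph_edge_other_end:
  assumes "simple_graph V E" "e \<in> E" "y \<in> e"
  obtains w where "w \<in> V" "w \<noteq> y" "e = {y, w}"
proof -
  obtain a b where "a \<in> V" "b \<in> V" "a \<noteq> b" "e = {a, b}" using simple_graph_edgeE[OF assms(1,2)] .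
  then show ?thesis using that assms(3) by (auto simp: insert_commute)
qed

lemma simple_graph_finite_edges:
  assumes "simple_graph V E"
  shows "finite E"
proof (rule finite_subset)
  show "E \<subseteq> Pow V" using simple_graph_edge_subset[OF assms] by auto
  show "finite (Pow V)" using assms unfolding simple_graph_def by simp
qed

lemma is_cycle_mono: "is_cycle F C \<Longrightarrow> F \<subseteq> E \<Longrightarrow> is_cycle E C"
  unfolding is_cycle_def by blast

definition is_path :: "'a set set \<Rightarrow> 'a list \<Rightarrow> bool" where
  "is_path F xs \<longleftrightarrow> distinct xs \<and> (\<forall>i. Suc i < length xs \<longrightarrow> {xs ! i, xs ! Suc i} \<in> F)"

lemma is_path_rev:
  assumes "is_path F xs"
  shows "is_path F (rev xs)"
  unfolding is_path_def
proof (intro conjI allI impI)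
  show "distinct (rev xs)" using assms by (simp add: is_path_def)
  fix i assume i: "Suc i < length (rev xs)"
  define j where "j = length xs - Suc (Suc i)"
  have j: "Suc j < length xs" "length xs - Suc i = Suc j" using i by (auto simp: j_def)
  then have "{xs ! j, xs ! Suc j} \<in> F" using assms by (simp add: is_path_def)
  then show "{rev xs ! i, rev xs ! Suc i} \<in> F" using i j by (simp add: rev_nth j_def insert_commute)
qed

lemma is_path_Cons:
  assumes "is_path F xs" "xs \<noteq> []" "y \<notin> set xs" "{y, hd xs} \<in> F"
  shows "is_path F (y # xs)"
  using assms unfolding is_path_def by (auto simp: hd_conv_nth nth_Cons split: nat.split)

lemma is_cycle_close_path:
  assumes "is_path F xs" "2 \<le> k" "k < length xs" "{xs ! k, xs ! 0} \<in> F"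
  shows "is_cycle F (cycle_edges (take (Suc k) xs))"
  unfolding is_cycle_def
proof (intro exI conjI)
  let ?vs = "take (Suc k) xs"
  show "3 \<le> length ?vs" "distinct ?vs" using assms by (simp_all add: is_path_def)
  show "cycle_edges ?vs \<subseteq> F"
  proof
    fix e assume "e \<in> cycle_edges ?vs"
    then obtain i where i: "i < Suc k" "e = {?vs ! i, ?vs ! ((i + 1) mod Suc k)}"
      using assms(3) unfolding cycle_edges_def by auto
    show "e \<in> F"
    proof (cases "i < k")
      case True
      then show ?thesis using i assms(1,3) by (simp add: is_path_def)
    next
      case False
      then have "i = k" using i(1) by simp
      then show ?thesis using i(2) assms(3,4) by (simp add: insert_commute)
    qed
  qed
qed simp

lemma longest_path_head_leaf:
  assumes acyclic: "\<not> (\<exists>C. is_cycle F C)" and xs: "is_path F xs" "2 \<le> length xs"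
    and longest: "\<And>ys. is_path F ys \<Longrightarrow> length ys \<le> length xs"
    and e: "e \<in> F" "hd xs \<in> e" and simple: "simple_graph V F"
  shows "e = {xs ! 0, xs ! 1}"
proof -
  have hd: "hd xs = xs ! 0" using xs(2) by (cases xs) auto
  obtain y where y: "e = {xs ! 0, y}" "y \<noteq> xs ! 0"
    using simple_graph_edge_other_end[OF simple e] hd by metis
  have "y \<in> set xs"
  proof (rule ccontr)
    assume "y \<notin> set xs"
    moreover have "xs \<noteq> []" "{y, hd xs} \<in> F" using xs(2) e(1) y(1) hd by (auto simp: insert_commute)
    ultimately have "is_path F (y # xs)" using is_path_Cons[OF xs(1)] by blast
    then show False using longest by fastforce
  qed
  then obtain k where k: "k < length xs" "xs ! k = y" by (auto simp: in_set_conv_nth)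
  have "\<not> 2 \<le> k"
    using is_cycle_close_path[OF xs(1) _ k(1)] acyclic e(1) y(1) k(2) by (auto simp: insert_commute)
  then have "k = 1" using k y(2) by (cases k) auto
  then show ?thesis using y k by simp
qed

lemma is_path_length_le:
  assumes simple: "simple_graph V F" and "is_path F ys"
  shows "length ys \<le> Suc (card V)"
proof -
  have "set (tl ys) \<subseteq> V"
  proof
    fix y assume "y \<in> set (tl ys)"
    then obtain j where "j < length (tl ys)" "y = tl ys ! j" by (metis in_set_conv_nth)
    then have "{ys ! j, ys ! Suc j} \<in> F" "y = ys ! Suc j"
      using assms(2) by (auto simp: is_path_def nth_tl)
    then show "y \<in> V" using simple_graph_edge_subset[OF simple] by blast
  qed
  moreover have "distinct (tl ys)" using assms(2) by (simp add: is_path_def distinct_tl)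
  ultimately have "length (tl ys) \<le> card V"
    using simple card_mono[of V "set (tl ys)"] distinct_card[of "tl ys"] unfolding simple_graph_def by simp
  then show ?thesis by simp
qed

lemma longest_path_exists:
  assumes simple: "simple_graph V F" and "F \<noteq> {}"
  obtains xs where "is_path F xs" "2 \<le> length xs" "\<And>ys. is_path F ys \<Longrightarrow> length ys \<le> length xs"
proof -
  obtain e where "e \<in> F" using assms(2) by blast
  then obtain u w where "{u, w} \<in> F" "u \<noteq> w" using simple_graph_edgeE[OF simple] by metis
  then have uw: "is_path F [u, w]" by (simp add: is_path_def)
  have "\<forall>ys. is_path F ys \<longrightarrow> length ys < Suc (Suc (card V))"
    using is_path_length_le[OF simple] by (simp add: less_Suc_eq_le)
  then obtain xs where "is_path F xs" "\<And>ys. is_path F ys \<Longrightarrow> length ys \<le> length xs"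
    using ex_has_greatest_nat[of "is_path F" "[u, w]" length] uw by blast
  moreover from this have "2 \<le> length xs" using uw by fastforce
  ultimately show ?thesis using that by blast
qed

text \<open>Both ends of a longest path are leaves, and they are distinct, so one of them avoids \<open>r\<close>.\<close>

lemma acyclic_has_leaf:
  assumes simple: "simple_graph V F" and "F \<noteq> {}" and acyclic: "\<not> (\<exists>C. is_cycle F C)"
  obtains x e where "x \<noteq> r" "e \<in> F" "x \<in> e" "\<And>e'. e' \<in> F \<Longrightarrow> x \<in> e' \<Longrightarrow> e' = e"
proof -
  note leaf = that
  obtain xs where xs: "is_path F xs" "2 \<le> length xs" "\<And>ys. is_path F ys \<Longrightarrow> length ys \<le> length xs"
    using longest_path_exists[OF simple assms(2)] by metis
  have head_leaf: thesis if "is_path F ys" "length ys = length xs" "hd ys \<noteq> r" for ys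
  proof -
    have len: "2 \<le> length ys" using xs(2) that(2) by simp
    have "{ys ! 0, ys ! 1} \<in> F" using that(1) len by (simp add: is_path_def)
    moreover have "hd ys \<in> {ys ! 0, ys ! 1}" using len by (cases ys) auto
    moreover have "e = {ys ! 0, ys ! 1}" if "e \<in> F" "hd ys \<in> e" for e
      using longest_path_head_leaf[OF acyclic \<open>is_path F ys\<close> len _ that simple] xs(3)
      by (simp add: \<open>length ys = length xs\<close>)
    ultimately show thesis using leaf \<open>hd ys \<noteq> r\<close> by blast
  qed
  have "hd xs \<noteq> last xs" using xs(1,2) unfolding is_path_def by (cases xs) auto
  then consider "hd xs \<noteq> r" | "hd (rev xs) \<noteq> r" by (cases "hd xs = r") (simp_all add: hd_rev)
  then show thesis
    using head_leaf[OF xs(1) refl] head_leaf[OF is_path_rev[OF xs(1)] length_rev] by cases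
qed

lemma inj_on_fun_upd_fresh:
  assumes "inj_on \<phi> (F - {e})" "x \<notin> \<phi> ` (F - {e})"
  shows "inj_on (\<phi>(e := x)) F"
proof (rule inj_onI)
  fix a b assume "a \<in> F" "b \<in> F" "(\<phi>(e := x)) a = (\<phi>(e := x)) b"
  then show "a = b" using assms by (cases "a = e"; cases "b = e") (auto simp: inj_on_def)
qed

lemma forest_orientation:
  assumes "simple_graph V F" "\<not> (\<exists>C. is_cycle F C)"
  shows "\<exists>\<phi>. inj_on \<phi> F \<and> (\<forall>e\<in>F. \<phi> e \<in> e \<and> \<phi> e \<noteq> r)"
  using simple_graph_finite_edges[OF assms(1)] assms
proof (induction F rule: finite_psubset_induct)
  case (psubset F)
  show ?case
  proof (cases "F = {}")
    case False
    obtain x e where leaf: "x \<noteq> r" "e \<in> F" "x \<in> e" "\<And>e'. e' \<in> F \<Longrightarrow> x \<in> e' \<Longrightarrow> e' = e"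
      using acyclic_has_leaf[OF psubset.prems(1) False psubset.prems(2)] by blast
    have "simple_graph V (F - {e})" "\<not> (\<exists>C. is_cycle (F - {e}) C)"
      using psubset.prems simple_graph_subset is_cycle_mono by blast+
    then obtain \<phi> where \<phi>: "inj_on \<phi> (F - {e})" "\<forall>e'\<in>F - {e}. \<phi> e' \<in> e' \<and> \<phi> e' \<noteq> r"
      using psubset.IH[of "F - {e}"] leaf(2) by blast
    have "x \<notin> \<phi> ` (F - {e})" using \<phi>(2) leaf(4) by blast
    then have "inj_on (\<phi>(e := x)) F" by (rule inj_on_fun_upd_fresh[OF \<phi>(1)])
    moreover have "\<forall>e'\<in>F. (\<phi>(e := x)) e' \<in> e' \<and> (\<phi>(e := x)) e' \<noteq> r" using \<phi>(2) leaf(1,3) by auto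
    ultimately show ?thesis by blast
  qed simp
qed

lemma unicyclic_orientation:
  assumes "unicyclic V E"
  shows "\<exists>\<phi>. inj_on \<phi> E \<and> (\<forall>e\<in>E. \<phi> e \<in> e)"
proof -
  have simple: "simple_graph V E" and "\<exists>!C. is_cycle E C" using assms unfolding unicyclic_def by simp_all
  then obtain C where C: "is_cycle E C" "\<And>C'. is_cycle E C' \<Longrightarrow> C' = C" by blast
  then obtain vs where vs: "3 \<le> length vs" "C = cycle_edges vs" "C \<subseteq> E"
    unfolding is_cycle_def by blast
  define e where "e = {vs ! 0, vs ! 1}"
  have "e \<in> C" unfolding vs(2) cycle_edges_def e_def using vs(1) by force
  have "\<not> (\<exists>C'. is_cycle (E - {e}) C')"
    using C \<open>e \<in> C\<close> is_cycle_mono[of "E - {e}" _ E] unfolding is_cycle_def by blast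
  then obtain \<phi> where \<phi>: "inj_on \<phi> (E - {e})" "\<forall>e'\<in>E - {e}. \<phi> e' \<in> e' \<and> \<phi> e' \<noteq> vs ! 0"
    using forest_orientation[OF simple_graph_subset[OF simple]] by blast
  have "vs ! 0 \<notin> \<phi> ` (E - {e})" using \<phi>(2) by (auto simp: image_iff)
  then show ?thesis
    using inj_on_fun_upd_fresh[OF \<phi>(1)] \<phi>(2) by (intro exI[of _ "\<phi>(e := vs ! 0)"]) (auto simp: e_def)
qed

definition hub_proj :: "'a \<Rightarrow> ('a set \<Rightarrow> 'a) \<Rightarrow> 'a set \<Rightarrow> 'a" where
  "hub_proj x \<phi> e = (if x \<in> e then the_elem (e - {x}) else \<phi> e)"

definition hub_collisions :: "'a set set \<Rightarrow> ('a set \<Rightarrow> 'a) \<Rightarrow> 'a \<Rightarrow> 'a set set" where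
  "hub_collisions E \<phi> x = {e \<in> E. x \<notin> e \<and> {x, \<phi> e} \<in> E}"

context
  fixes V E \<phi> x
  assumes simple: "simple_graph V E" and inj: "inj_on \<phi> E" and head: "\<forall>e\<in>E. \<phi> e \<in> e"
    and x: "x \<in> V"
begin

lemma hub_edge_eq:
  assumes "e \<in> E" "x \<in> e"
  shows "e = {x, hub_proj x \<phi> e}" "hub_proj x \<phi> e \<noteq> x"
proof -
  obtain w where "w \<noteq> x" "e = {x, w}" using simple_graph_edge_other_end[OF simple assms] .
  then show "e = {x, hub_proj x \<phi> e}" "hub_proj x \<phi> e \<noteq> x"
    by (auto simp: hub_proj_def insert_Diff_if)
qed

lemma hub_proj_mem:
  assumes "e \<in> E"
  shows "hub_proj x \<phi> e \<in> e" "hub_proj x \<phi> e \<in> V - {x}"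
proof -
  have "hub_proj x \<phi> e \<in> e - {x}"
    using hub_edge_eq[OF assms] head assms by (cases "x \<in> e") (auto simp: hub_proj_def)
  then show "hub_proj x \<phi> e \<in> e" "hub_proj x \<phi> e \<in> V - {x}"
    using simple_graph_edge_subset[OF simple assms] by auto
qed

lemma inj_on_hub_proj: "inj_on (hub_proj x \<phi>) (E - hub_collisions E \<phi> x)"
proof (rule inj_onI)
  fix a b assume a: "a \<in> E - hub_collisions E \<phi> x" and b: "b \<in> E - hub_collisions E \<phi> x"
    and eq: "hub_proj x \<phi> a = hub_proj x \<phi> b"
  have collision: False if "c \<in> E - hub_collisions E \<phi> x" "d \<in> E - hub_collisions E \<phi> x"
      "x \<notin> c" "x \<in> d" "hub_proj x \<phi> d = hub_proj x \<phi> c" for c d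
  proof -
    have "{x, \<phi> c} = d" using hub_edge_eq(1)[of d] that by (simp add: hub_proj_def)
    then show False using that by (simp add: hub_collisions_def)
  qed
  show "a = b"
  proof (cases "x \<in> a"; cases "x \<in> b")
    assume "x \<in> a" "x \<in> b"
    then show ?thesis using a b eq hub_edge_eq(1) by (metis DiffD1)
  next
    assume "x \<in> a" "x \<notin> b"
    then show ?thesis using collision[OF b a] eq by simp
  next
    assume "x \<notin> a" "x \<in> b"
    then show ?thesis using collision[OF a b] eq by simp
  next
    assume "x \<notin> a" "x \<notin> b"
    then show ?thesis using a b eq inj by (simp add: hub_proj_def inj_on_def)
  qed
qed

lemma hub_collisions_subsingleton:
  assumes "e \<in> hub_collisions E \<phi> x" "e' \<in> hub_collisions E \<phi> x"
  shows "e = e'"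
proof -
  have to_hub: "\<phi> {x, \<phi> d} = x" "\<phi> d \<noteq> x" if "d \<in> hub_collisions E \<phi> x" for d
  proof -
    have d: "d \<in> E" "x \<notin> d" "{x, \<phi> d} \<in> E" using that by (auto simp: hub_collisions_def)
    then have "\<phi> {x, \<phi> d} \<noteq> \<phi> d" using inj unfolding inj_on_def by fastforce
    then show "\<phi> {x, \<phi> d} = x" using head d(3) by auto
    show "\<phi> d \<noteq> x" using head d(1,2) by auto
  qed
  have "{x, \<phi> e} = {x, \<phi> e'}"
    using to_hub assms inj unfolding inj_on_def hub_collisions_def by (metis (no_types, lifting) mem_Collect_eq)
  then have "\<phi> e = \<phi> e'" using to_hub(2) assms by (auto simp: doubleton_eq_iff)
  then show ?thesis using inj assms unfolding inj_on_def hub_collisions_def by blast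
qed

context
  fixes Y :: "'a \<Rightarrow> real"
  assumes Y_nonneg: "\<forall>u\<in>V. 0 \<le> Y u" and Y_max: "\<forall>u\<in>V. Y u \<le> Y x"
begin

lemma edge_weight_le_hub_proj:
  assumes "e \<in> E"
  shows "prod Y e \<le> Y x * Y (hub_proj x \<phi> e)"
    and "(\<forall>u\<in>V. 0 < Y u) \<Longrightarrow> (\<forall>u\<in>V - {x}. Y u < Y x) \<Longrightarrow> x \<notin> e \<Longrightarrow>
      prod Y e < Y x * Y (hub_proj x \<phi> e)"
proof -
  let ?y = "hub_proj x \<phi> e"
  have y: "?y \<in> e" "?y \<in> V" using hub_proj_mem[OF assms] by auto
  obtain w where w: "w \<in> V" "w \<noteq> ?y" "e = {?y, w}"
    using simple_graph_edge_other_end[OF simple assms y(1)] .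
  have "prod Y e = prod Y {?y, w}" using w(3) by (rule arg_cong)
  also have "\<dots> = Y w * Y ?y" using w(2) by simp
  finally have "prod Y e = Y w * Y ?y" .
  then show "prod Y e \<le> Y x * Y ?y"
    using w(1) y(2) Y_nonneg Y_max by (simp add: mult_right_mono)
  assume "\<forall>u\<in>V. 0 < Y u" "\<forall>u\<in>V - {x}. Y u < Y x" "x \<notin> e"
  moreover have "w \<in> e" by (subst w(3)) simp
  ultimately show "prod Y e < Y x * Y ?y"
    using \<open>prod Y e = Y w * Y ?y\<close> w(1) y(2) by (auto intro: mult_strict_right_mono)
qed

lemma sum_off_hub_collisions_le:
  "sum (prod Y) (E - hub_collisions E \<phi> x) \<le> (\<Sum>y\<in>V - {x}. Y x * Y y)"
proof -
  let ?E' = "E - hub_collisions E \<phi> x" and ?y = "hub_proj x \<phi>"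
  have "sum (prod Y) ?E' \<le> (\<Sum>e\<in>?E'. Y x * Y (?y e))"
    by (rule sum_mono) (simp add: edge_weight_le_hub_proj)
  also have "\<dots> = (\<Sum>y\<in>?y ` ?E'. Y x * Y y)"
    using sum.reindex[OF inj_on_hub_proj, of "\<lambda>y. Y x * Y y"] by (simp add: comp_def)
  also have "\<dots> \<le> (\<Sum>y\<in>V - {x}. Y x * Y y)"
    using hub_proj_mem Y_nonneg x simple
    by (intro sum_mono2) (auto simp: simple_graph_def)
  finally show ?thesis .
qed

lemma sum_off_hub_collisions_less:
  assumes pos: "\<forall>u\<in>V. 0 < Y u" and strict: "\<forall>u\<in>V - {x}. Y u < Y x"
    and "(\<exists>e\<in>E - hub_collisions E \<phi> x. x \<notin> e) \<or> hub_proj x \<phi> ` (E - hub_collisions E \<phi> x) \<noteq> V - {x}"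
  shows "sum (prod Y) (E - hub_collisions E \<phi> x) < (\<Sum>y\<in>V - {x}. Y x * Y y)"
proof -
  let ?E' = "E - hub_collisions E \<phi> x" and ?y = "hub_proj x \<phi>"
  have finV: "finite V" using simple by (simp add: simple_graph_def)
  have finE': "finite ?E'" using simple_graph_finite_edges[OF simple] by simp
  have sub: "?y ` ?E' \<subseteq> V - {x}" using hub_proj_mem by auto
  have le: "sum (prod Y) ?E' \<le> (\<Sum>e\<in>?E'. Y x * Y (?y e))"
    by (rule sum_mono) (simp add: edge_weight_le_hub_proj)
  have reindex: "(\<Sum>e\<in>?E'. Y x * Y (?y e)) = (\<Sum>y\<in>?y ` ?E'. Y x * Y y)"
    using sum.reindex[OF inj_on_hub_proj, of "\<lambda>y. Y x * Y y"] by (simp add: comp_def)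
  have le': "(\<Sum>y\<in>?y ` ?E'. Y x * Y y) \<le> (\<Sum>y\<in>V - {x}. Y x * Y y)"
    using sub finV Y_nonneg x by (intro sum_mono2) auto
  from assms(3) show ?thesis
  proof
    assume "\<exists>e\<in>?E'. x \<notin> e"
    then have "\<exists>e\<in>?E'. prod Y e < Y x * Y (?y e)" using edge_weight_le_hub_proj(2) pos strict by blast
    then have "sum (prod Y) ?E' < (\<Sum>e\<in>?E'. Y x * Y (?y e))"
      using finE' by (intro sum_strict_mono_ex1) (auto simp: edge_weight_le_hub_proj)
    then show ?thesis using reindex le' by linarith
  next
    assume "?y ` ?E' \<noteq> V - {x}"
    then obtain z where "z \<in> V - {x} - ?y ` ?E'" using sub by blast
    then have "(\<Sum>y\<in>?y ` ?E'. Y x * Y y) < (\<Sum>y\<in>V - {x}. Y x * Y y)"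
      using finV sub pos x by (intro sum_strict_mono2) (auto intro: mult_pos_pos less_imp_le)
    then show ?thesis using le reindex by linarith
  qed
qed

lemma sum_hub_collisions_le:
  assumes "\<forall>u\<in>V - {x}. \<forall>w\<in>V - {x}. u \<noteq> w \<longrightarrow> Y u * Y w \<le> c" "0 \<le> c"
  shows "sum (prod Y) (hub_collisions E \<phi> x) \<le> c"
proof (cases "hub_collisions E \<phi> x = {}")
  case False
  then obtain e where e: "hub_collisions E \<phi> x = {e}"
    using hub_collisions_subsingleton by blast
  then have "e \<in> E" "x \<notin> e" by (auto simp: hub_collisions_def)
  then obtain u w where "u \<in> V" "w \<in> V" "u \<noteq> w" "e = {u, w}"
    using simple_graph_edgeE[OF simple] by metis
  moreover from this have "Y u * Y w \<le> c" using assms(1) \<open>x \<notin> e\<close> by auto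
  ultimately show ?thesis using e by simp
qed (simp add: assms(2))

lemma sum_edges_split_hub_collisions:
  "sum (prod Y) E = sum (prod Y) (E - hub_collisions E \<phi> x) + sum (prod Y) (hub_collisions E \<phi> x)"
  using simple_graph_finite_edges[OF simple] by (intro sum.subset_diff) (auto simp: hub_collisions_def)

lemma hub_edge_sum_le:
  assumes "\<forall>u\<in>V - {x}. \<forall>w\<in>V - {x}. u \<noteq> w \<longrightarrow> Y u * Y w \<le> c" "0 \<le> c"
  shows "sum (prod Y) E \<le> (\<Sum>y\<in>V - {x}. Y x * Y y) + c"
  using sum_edges_split_hub_collisions sum_off_hub_collisions_le
    sum_hub_collisions_le[OF assms] by linarith

lemma hub_edge_sum_eq_imp_star:
  assumes bound: "\<forall>u\<in>V - {x}. \<forall>w\<in>V - {x}. u \<noteq> w \<longrightarrow> Y u * Y w \<le> c" and "0 < c"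
    and pos: "\<forall>u\<in>V. 0 < Y u" and strict: "\<forall>u\<in>V - {x}. Y u < Y x"
    and eq: "sum (prod Y) E = (\<Sum>y\<in>V - {x}. Y x * Y y) + c"
  obtains p q where "p \<in> V - {x}" "q \<in> V - {x}" "p \<noteq> q"
    "E = (\<lambda>y. {x, y}) ` (V - {x}) \<union> {{p, q}}"
proof -
  let ?C = "hub_collisions E \<phi> x" and ?y = "hub_proj x \<phi>"
  note split = sum_edges_split_hub_collisions
  note le_c = sum_hub_collisions_le[OF bound less_imp_le[OF \<open>0 < c\<close>]]
  have "\<not> sum (prod Y) (E - ?C) < (\<Sum>y\<in>V - {x}. Y x * Y y)"
    using split le_c eq by linarith
  then have at_hub: "\<forall>e\<in>E - ?C. x \<in> e" and onto: "?y ` (E - ?C) = V - {x}"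
    using sum_off_hub_collisions_less[OF pos strict] by blast+
  have "?C \<noteq> {}"
    using split sum_off_hub_collisions_le eq \<open>0 < c\<close>
    by fastforce
  then obtain e where e: "?C = {e}" using hub_collisions_subsingleton by blast
  then have "e \<in> E" "x \<notin> e" by (auto simp: hub_collisions_def)
  then obtain p q where "p \<in> V" "q \<in> V" "p \<noteq> q" "e = {p, q}"
    using simple_graph_edgeE[OF simple] by metis
  with \<open>x \<notin> e\<close> have pq: "p \<in> V - {x}" "q \<in> V - {x}" "p \<noteq> q" "e = {p, q}" by auto
  have "E - ?C = (\<lambda>e. {x, ?y e}) ` (E - ?C)"
    using hub_edge_eq at_hub by (auto simp: image_iff)
  also have "\<dots> = (\<lambda>y. {x, y}) ` (V - {x})" by (simp add: image_image flip: onto)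
  finally have "E = (\<lambda>y. {x, y}) ` (V - {x}) \<union> {{p, q}}"
    using e pq(4) \<open>e \<in> E\<close> by blast
  then show ?thesis using that pq(1-3) by blast
qed

end

end

lemma graph_iso_image_edges:
  assumes "bij_betw f V W" "\<forall>e\<in>E. e \<subseteq> V"
  shows "graph_iso f V E W ((`) f ` E)"
  unfolding graph_iso_def
proof (intro conjI ballI)
  fix u w assume "u \<in> V" "w \<in> V"
  then have "f ` {u, w} = f ` e \<longleftrightarrow> {u, w} = e" if "e \<in> E" for e
    using that assms by (intro inj_on_image_eq_iff[of f V]) (auto simp: bij_betw_def)
  then show "{u, w} \<in> E \<longleftrightarrow> {f u, f w} \<in> (`) f ` E" by (auto simp: image_iff)
qed (rule assms(1))

lemma star_plus_edge_iso_S3: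
  assumes finV: "finite V" and n: "n = card V" and x: "x \<in> V"
    and pq: "p \<in> V - {x}" "q \<in> V - {x}" "p \<noteq> q"
  shows "\<exists>f. graph_iso f V ((\<lambda>y. {x, y}) ` (V - {x}) \<union> {{p, q}}) {0..<n} (S3_edges n) \<and> f x = 0"
proof -
  let ?W = "V - {x, p, q}"
  have sub: "{x, p, q} \<subseteq> V" and c3: "card {x, p, q} = 3" using x pq by auto
  then have n3: "3 \<le> n" using card_mono[OF finV sub] n by simp
  have "card ?W = card {3..<n}" using finV sub c3 n by (simp add: card_Diff_subset)
  then obtain g where g: "bij_betw g ?W {3..<n}" using finV finite_same_card_bij by blast
  define f where "f = g(x := 0, p := 1, q := 2)"
  have "bij_betw f ?W {3..<n}" using g by (rule bij_betw_cong[THEN iffD1, rotated]) (simp add: f_def)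
  moreover have "bij_betw f {x, p, q} {0, 1, 2}" using pq by (auto simp: f_def bij_betw_def)
  ultimately have "bij_betw f ({x, p, q} \<union> ?W) ({0, 1, 2} \<union> {3..<n})"
    by (intro bij_betw_combine) auto
  moreover have "{x, p, q} \<union> ?W = V" "{0, 1, 2} \<union> {3..<n} = {0..<n}" using sub n3 by auto
  ultimately have bij: "bij_betw f V {0..<n}" by simp
  have fx: "f x = 0" and fpq: "f ` {p, q} = {1, 2}" using pq by (auto simp: f_def)
  have "f ` (V - {x}) = f ` V - f ` {x}"
    using bij x by (intro inj_on_image_set_diff) (auto simp: bij_betw_def)
  also have "\<dots> = {1..<n}" using bij fx by (auto simp: bij_betw_def)
  finally have "(`) f ` ((\<lambda>y. {x, y}) ` (V - {x})) = (\<lambda>k. {0, k}) ` {1..<n}"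
    using fx by (simp add: image_image flip: image_image[of "\<lambda>k. {0, k}" f])
  then have "(`) f ` ((\<lambda>y. {x, y}) ` (V - {x}) \<union> {{p, q}}) = S3_edges n"
    using fpq by (auto simp: S3_edges_def)
  moreover have "\<forall>e\<in>(\<lambda>y. {x, y}) ` (V - {x}) \<union> {{p, q}}. e \<subseteq> V" using x pq by auto
  ultimately show ?thesis using graph_iso_image_edges[OF bij] fx by metis
qed

lemma same_sign_mult_eq_abs:
  fixes X :: "'a \<Rightarrow> real"
  assumes "(\<forall>x\<in>V. X x \<ge> 0) \<or> (\<forall>x\<in>V. X x \<le> 0)" "u \<in> V" "w \<in> V"
  shows "X u * X w = \<bar>X u\<bar> * \<bar>X w\<bar>"
proof -
  have "0 \<le> X u * X w" using assms by (auto intro: mult_nonneg_nonneg mult_nonpos_nonpos)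
  then show ?thesis by (simp add: abs_mult[symmetric])
qed

lemma same_sign_edge_sum_abs:
  fixes X :: "'a \<Rightarrow> real"
  assumes "simple_graph V E" "(\<forall>x\<in>V. X x \<ge> 0) \<or> (\<forall>x\<in>V. X x \<le> 0)"
  shows "(\<Sum>e\<in>E. \<Prod>x\<in>e. X x) = (\<Sum>e\<in>E. \<Prod>x\<in>e. \<bar>X x\<bar>)"
proof (rule sum.cong)
  fix e assume "e \<in> E"
  then obtain u w where "u \<in> V" "w \<in> V" "u \<noteq> w" "e = {u, w}"
    using simple_graph_edgeE[OF assms(1)] by metis
  then show "(\<Prod>x\<in>e. X x) = (\<Prod>x\<in>e. \<bar>X x\<bar>)" using same_sign_mult_eq_abs[OF assms(2)] by simp
qed simp

locale decreasing_labelling =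
  fixes v :: "nat \<Rightarrow> 'a" and n :: nat and V :: "'a set" and Y :: "'a \<Rightarrow> real"
  assumes bij_label: "bij_betw v {1..n} V" and three_le: "3 \<le> n"
    and decreasing: "\<And>i j. 1 \<le> i \<Longrightarrow> i \<le> j \<Longrightarrow> j \<le> n \<Longrightarrow> Y (v j) \<le> Y (v i)"
begin

lemma label_mem: "1 \<le> i \<Longrightarrow> i \<le> n \<Longrightarrow> v i \<in> V"
  using bij_label by (auto simp: bij_betw_def)

lemma label_rest: "v ` {2..n} = V - {v 1}"
proof -
  have "v ` {2..n} = v ` ({1..n} - {1})" by (rule arg_cong[where f = "image v"]) auto
  also have "\<dots> = v ` {1..n} - v ` {1}"
    using bij_label three_le by (intro inj_on_image_set_diff) (auto simp: bij_betw_def)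
  also have "\<dots> = V - {v 1}" using bij_label by (simp add: bij_betw_def)
  finally show ?thesis .
qed

lemma label_first: "v 1 \<in> V"
  using label_mem three_le by simp

lemma card_labelled: "card V = n"
  using bij_betw_same_card[OF bij_label] by simp

lemma label_le_first: "\<forall>u\<in>V. Y u \<le> Y (v 1)"
proof
  fix u assume "u \<in> V"
  then obtain i where "i \<in> {1..n}" "u = v i" using bij_label by (auto simp: bij_betw_def)
  then show "Y u \<le> Y (v 1)" using decreasing[of 1 i] by simp
qed

lemma label_le_second:
  assumes "u \<in> V - {v 1}"
  shows "Y u \<le> Y (v 2)"
proof -
  obtain i where "i \<in> {2..n}" "u = v i" using assms label_rest by blast
  then show ?thesis using decreasing[of 2 i] by simp
qed

lemma label_pair_le:
  assumes "\<forall>u\<in>V. 0 \<le> Y u"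
  shows "\<forall>u\<in>V - {v 1}. \<forall>w\<in>V - {v 1}. u \<noteq> w \<longrightarrow> Y u * Y w \<le> Y (v 2) * Y (v 3)"
proof (intro ballI impI)
  fix u w assume "u \<in> V - {v 1}" "w \<in> V - {v 1}" "u \<noteq> w"
  then obtain i j where ij: "i \<in> {2..n}" "j \<in> {2..n}" "u = v i" "w = v j" "i \<noteq> j"
    unfolding label_rest[symmetric] by blast
  have sorted: "Y (v i) * Y (v j) \<le> Y (v 2) * Y (v 3)" if "i < j" "i \<in> {2..n}" "j \<in> {2..n}" for i j
    using that decreasing[of 2 i] decreasing[of 3 j] assms label_mem three_le by (intro mult_mono) auto
  show "Y u * Y w \<le> Y (v 2) * Y (v 3)"
  proof (cases "i < j")
    case True
    then show ?thesis using sorted ij by simp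
  next
    case False
    then have "j < i" using ij(5) by simp
    then show ?thesis using sorted[of j i] ij by (simp add: mult.commute)
  qed
qed

lemma sum_label_rest: "(\<Sum>i=2..n. f (v i)) = (\<Sum>y\<in>V - {v 1}. f y)"
  using sum.reindex[of v "{2..n}" f] bij_label label_rest
  by (simp add: bij_betw_def inj_on_subset[of v "{1..n}" "{2..n}"])

lemma unicyclic_edge_sum_le:
  assumes "unicyclic V E" and nonneg: "\<forall>u\<in>V. 0 \<le> Y u"
  shows "sum (prod Y) E \<le> (\<Sum>i=2..n. Y (v 1) * Y (v i)) + Y (v 2) * Y (v 3)"
proof -
  have simple: "simple_graph V E" using assms(1) by (simp add: unicyclic_def)
  obtain \<phi> where \<phi>: "inj_on \<phi> E" "\<forall>e\<in>E. \<phi> e \<in> e" using unicyclic_orientation[OF assms(1)] by blast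
  have "0 \<le> Y (v 2) * Y (v 3)" using nonneg label_mem three_le by simp
  then have "sum (prod Y) E \<le> (\<Sum>y\<in>V - {v 1}. Y (v 1) * Y y) + Y (v 2) * Y (v 3)"
    by (rule hub_edge_sum_le[OF simple \<phi> label_first nonneg label_le_first label_pair_le[OF nonneg]])
  then show ?thesis using sum_label_rest[of "\<lambda>y. Y (v 1) * Y y"] by simp
qed

lemma unicyclic_edge_sum_eq_imp_S3:
  assumes "unicyclic V E" and pos: "\<forall>u\<in>V. 0 < Y u" and gap: "Y (v 2) < Y (v 1)"
    and eq: "sum (prod Y) E = (\<Sum>i=2..n. Y (v 1) * Y (v i)) + Y (v 2) * Y (v 3)"
  shows "\<exists>f. graph_iso f V E {0..<n} (S3_edges n) \<and> f (v 1) = 0"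
proof -
  have nonneg: "\<forall>u\<in>V. 0 \<le> Y u" using pos by (simp add: less_imp_le)
  have simple: "simple_graph V E" using assms(1) by (simp add: unicyclic_def)
  obtain \<phi> where \<phi>: "inj_on \<phi> E" "\<forall>e\<in>E. \<phi> e \<in> e" using unicyclic_orientation[OF assms(1)] by blast
  have strict: "\<forall>u\<in>V - {v 1}. Y u < Y (v 1)" using label_le_second gap by (meson order.strict_trans1)
  have "0 < Y (v 2) * Y (v 3)" using pos label_mem three_le by simp
  moreover have "sum (prod Y) E = (\<Sum>y\<in>V - {v 1}. Y (v 1) * Y y) + Y (v 2) * Y (v 3)"
    using eq sum_label_rest[of "\<lambda>y. Y (v 1) * Y y"] by simp
  ultimately obtain p q where pq: "p \<in> V - {v 1}" "q \<in> V - {v 1}" "p \<noteq> q"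
      and E: "E = (\<lambda>y. {v 1, y}) ` (V - {v 1}) \<union> {{p, q}}"
    using hub_edge_sum_eq_imp_star[OF simple \<phi> label_first nonneg label_le_first label_pair_le[OF nonneg]
        _ pos strict] by blast
  have "finite V" using simple by (simp add: simple_graph_def)
  then show ?thesis
    unfolding E using star_plus_edge_iso_S3[OF _ card_labelled[symmetric] label_first pq] by blast
qed

end

theorem lemma3p2:
  fixes V :: "'a set" and E :: "'a set set" and X :: "'a \<Rightarrow> real"
    and v :: "nat \<Rightarrow> 'a" and n :: nat
  assumes U: "unicyclic V E"
    and n: "n = card V" "n \<ge> 3"
    and sign: "(\<forall>x\<in>V. X x \<ge> 0) \<or> (\<forall>x\<in>V. X x \<le> 0)"
    and lab: "bij_betw v {1..n} V"
    and ord: "\<And>i j. 1 \<le> i \<Longrightarrow> i \<le> j \<Longrightarrow> j \<le> n \<Longrightarrow> \<bar>X (v j)\<bar> \<le> \<bar>X (v i)\<bar>"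
  shows "(\<Sum>e\<in>E. \<Prod>x\<in>e. X x)
           \<le> (\<Sum>i=2..n. X (v 1) * X (v i)) + X (v 2) * X (v 3) \<and>
         (((\<forall>x\<in>V. X x > 0) \<or> (\<forall>x\<in>V. X x < 0)) \<longrightarrow> \<bar>X (v 1)\<bar> > \<bar>X (v 2)\<bar> \<longrightarrow>
         (\<Sum>e\<in>E. \<Prod>x\<in>e. X x) = (\<Sum>i=2..n. X (v 1) * X (v i)) + X (v 2) * X (v 3) \<longrightarrow>
         (\<exists>f. graph_iso f V E {0..<n} (S3_edges n) \<and> f (v 1) = 0))"
proof -
  define Y where "Y u = \<bar>X u\<bar>" for u
  have "decreasing_labelling v n V Y" using lab n(2) ord by (simp add: decreasing_labelling_def Y_def)
  then interpret decreasing_labelling v n V Y .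
  have lhs: "(\<Sum>e\<in>E. \<Prod>x\<in>e. X x) = sum (prod Y) E"
    using U same_sign_edge_sum_abs[OF _ sign] by (simp add: unicyclic_def Y_def)
  have "(\<Sum>i=2..n. X (v 1) * X (v i)) = (\<Sum>i=2..n. Y (v 1) * Y (v i))"
    using same_sign_mult_eq_abs[OF sign] label_mem by (intro sum.cong) (auto simp: Y_def)
  moreover have "X (v 2) * X (v 3) = Y (v 2) * Y (v 3)"
    using same_sign_mult_eq_abs[OF sign] label_mem n(2) by (simp add: Y_def)
  ultimately have rhs: "(\<Sum>i=2..n. X (v 1) * X (v i)) + X (v 2) * X (v 3)
      = (\<Sum>i=2..n. Y (v 1) * Y (v i)) + Y (v 2) * Y (v 3)" by simp
  show ?thesis
  proof (intro conjI impI)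
    show "(\<Sum>e\<in>E. \<Prod>x\<in>e. X x) \<le> (\<Sum>i=2..n. X (v 1) * X (v i)) + X (v 2) * X (v 3)"
      using unicyclic_edge_sum_le[OF U] lhs rhs by (simp add: Y_def)
  next
    assume pos: "(\<forall>x\<in>V. X x > 0) \<or> (\<forall>x\<in>V. X x < 0)" and gap: "\<bar>X (v 1)\<bar> > \<bar>X (v 2)\<bar>"
      and eq: "(\<Sum>e\<in>E. \<Prod>x\<in>e. X x) = (\<Sum>i=2..n. X (v 1) * X (v i)) + X (v 2) * X (v 3)"
    have "\<forall>u\<in>V. 0 < Y u" using pos by (auto simp: Y_def)
    moreover have "Y (v 2) < Y (v 1)" using gap by (simp add: Y_def)
    moreover have "sum (prod Y) E = (\<Sum>i=2..n. Y (v 1) * Y (v i)) + Y (v 2) * Y (v 3)"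
      using eq lhs rhs by simp
    ultimately show "\<exists>f. graph_iso f V E {0..<n} (S3_edges n) \<and> f (v 1) = 0"
      by (rule unicyclic_edge_sum_eq_imp_S3[OF U])
  qed
qed

end
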